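(* If $\pi$ is a Fishburn permutation, then $\upsilon(\pi)=\tilde\upsilon(\pi)$.
   Context: A permutation $\pi$ of $[n]$ is Fishburn if there are no indices $i$ and $k>i+1$ with $\pi(i)<\pi(i+1)$ and $\pi(k)=\pi(i)-1$. For $i\in[n]$ let $J(i)=0$ if $\pi(i)=1$, and otherwise let $J(i)$ be the index with $\pi(J(i))=\pi(i)-1$. The sites of $\pi$ are the site before $\pi(1)$ and the site after $\pi(i)$ for each $i\in[n]$. Fishburn-active sites: the site before $\pi(1)$ is active, and the site after $\pi(i)$ is active iff $J(i)<i$. $\eta$-active sites: the site before $\pi(1)$ is $\eta$-active, and the site after $\pi(i)$ is $\eta$-active iff $J(i)<i$, or $i<n$ and $\pi(i)<\pi(i+1)$. $\upsilon(\pi)$ (resp. $\tilde\upsilon(\pi)$) is the word of length $n$ whose $j$-th letter is the number of Fishburn-active (resp. $\eta$-active) sites to the left of $\pi(j)$. *)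

theory Defs
  imports Main
begin

text \<open>A permutation of [n] is a function pi :: nat => nat that is a bijection
  of {1..n} onto itself; positions and values are 1-based.\<close>

definition is_perm :: "nat \<Rightarrow> (nat \<Rightarrow> nat) \<Rightarrow> bool" where
  "is_perm n pi \<longleftrightarrow> bij_betw pi {1..n} {1..n}"

definition fishburn :: "nat \<Rightarrow> (nat \<Rightarrow> nat) \<Rightarrow> bool" where
  "fishburn n pi \<longleftrightarrow> is_perm n pi \<and>
     \<not> (\<exists>i k. 1 \<le> i \<and> k \<le> n \<and> k > i + 1 \<and> pi i < pi (i + 1) \<and> pi k + 1 = pi i)"

definition Jidx :: "nat \<Rightarrow> (nat \<Rightarrow> nat) \<Rightarrow> nat \<Rightarrow> nat" where
  "Jidx n pi i = (if pi i = 1 then 0 else (THE j. j \<in> {1..n} \<and> pi j = pi i - 1))"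

text \<open>Sites are numbered 0..n: site 0 is before pi(1), site i (1 <= i <= n) is after pi(i).\<close>
definition fish_active :: "nat \<Rightarrow> (nat \<Rightarrow> nat) \<Rightarrow> nat \<Rightarrow> bool" where
  "fish_active n pi s \<longleftrightarrow> s = 0 \<or> (1 \<le> s \<and> s \<le> n \<and> Jidx n pi s < s)"

definition eta_active :: "nat \<Rightarrow> (nat \<Rightarrow> nat) \<Rightarrow> nat \<Rightarrow> bool" where
  "eta_active n pi s \<longleftrightarrow> s = 0 \<or>
     (1 \<le> s \<and> s \<le> n \<and> (Jidx n pi s < s \<or> (s < n \<and> pi s < pi (s + 1))))"

text \<open>The j-th letter counts active sites to the left of pi(j), i.e. sites 0..j-1.\<close>
definition upsilon :: "nat \<Rightarrow> (nat \<Rightarrow> nat) \<Rightarrow> nat list" where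
  "upsilon n pi = map (\<lambda>j. card {s. s < j \<and> fish_active n pi s}) [1..<n+1]"

definition upsilon_tilde :: "nat \<Rightarrow> (nat \<Rightarrow> nat) \<Rightarrow> nat list" where
  "upsilon_tilde n pi = map (\<lambda>j. card {s. s < j \<and> eta_active n pi s}) [1..<n+1]"

end

theory Submission
  imports Defs
begin

text \<open>The two notions of active site differ only at an ascent \<open>\<pi>(s) < \<pi>(s+1)\<close>.
  There the predecessor value \<open>\<pi>(s) - 1\<close> cannot sit at position \<open>s\<close> or \<open>s + 1\<close>,
  and the Fishburn condition forbids it to the right of \<open>s + 1\<close>; hence \<open>J(s) < s\<close>,
  so every \<open>\<eta>\<close>-active site is already Fishburn-active and the two words agree.\<close>

lemma Jidx_eq_preimage:
  assumes "is_perm n pi" and "j \<in> {1..n}" and "pi j + 1 = pi i"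
  shows "Jidx n pi i = j"
proof -
  have inj: "inj_on pi {1..n}" using assms(1) unfolding is_perm_def bij_betw_def by blast
  have "pi j \<in> {1..n}" using assms(1,2) unfolding is_perm_def by (rule bij_betw_apply)
  then have "pi i \<noteq> 1" using assms(3) by simp
  moreover have "(THE j'. j' \<in> {1..n} \<and> pi j' = pi i - 1) = j"
  proof (rule the_equality)
    show "j \<in> {1..n} \<and> pi j = pi i - 1" using assms(2,3) by simp
    show "j' = j" if "j' \<in> {1..n} \<and> pi j' = pi i - 1" for j'
      using inj_onD[OF inj _ _ assms(2)] that assms(3) by simp
  qed
  ultimately show ?thesis unfolding Jidx_def by simp
qed

lemma is_perm_pred_preimage:
  assumes "is_perm n pi" and "i \<in> {1..n}" and "pi i \<noteq> 1"
  obtains j where "j \<in> {1..n}" and "pi j + 1 = pi i"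
proof -
  have "pi i \<in> {1..n}" using assms(1,2) unfolding is_perm_def by (rule bij_betw_apply)
  then have "pi i - 1 \<in> pi ` {1..n}"
    using assms(1,3) unfolding is_perm_def bij_betw_def by auto
  then obtain j where "pi i - 1 = pi j" and "j \<in> {1..n}" by (rule imageE)
  moreover have "pi i - 1 + 1 = pi i" using \<open>pi i \<in> {1..n}\<close> assms(3) by simp
  ultimately show thesis using that by simp
qed

lemma fishburn_ascent_Jidx_less:
  assumes F: "fishburn n pi" and "1 \<le> s" and "s < n" and asc: "pi s < pi (s + 1)"
  shows "Jidx n pi s < s"
proof (cases "pi s = 1")
  case True
  then show ?thesis using \<open>1 \<le> s\<close> by (simp add: Jidx_def)
next
  case False
  have perm: "is_perm n pi" using F unfolding fishburn_def by blast
  obtain j where j: "j \<in> {1..n}" and pred: "pi j + 1 = pi s"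
    using is_perm_pred_preimage[OF perm _ False] \<open>1 \<le> s\<close> \<open>s < n\<close> by auto
  have "j \<noteq> s" and "j \<noteq> s + 1" using pred asc by auto
  moreover have "\<not> j > s + 1"
    using F \<open>1 \<le> s\<close> asc j pred unfolding fishburn_def by auto
  ultimately show ?thesis using Jidx_eq_preimage[OF perm j pred] by simp
qed

lemma fishburn_eta_active_iff:
  assumes "fishburn n pi"
  shows "eta_active n pi s \<longleftrightarrow> fish_active n pi s"
  using fishburn_ascent_Jidx_less[OF assms]
  unfolding fish_active_def eta_active_def by auto

theorem lemma7p1:
  fixes n :: nat and pi :: "nat \<Rightarrow> nat"
  assumes "fishburn n pi"
  shows "upsilon n pi = upsilon_tilde n pi"
  unfolding upsilon_def upsilon_tilde_def
  using fishburn_eta_active_iff[OF assms] by simp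

end
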